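(* Let $V$ be an $n$-dimensional vector space over a field $\mathbb{F}$, and let $k<n/2$. If $L$ is a subspace of $\bigwedge^{k}V$ such that $x\wedge y=0$ for all $x,y\in L$ and $\dim L=\binom{n-1}{k-1}$, then there is a nonzero $v\in V=\bigwedge^{1}V$ such that $v\wedge x=0$ for all $x\in L$.
   Context: $\bigwedge V$ denotes the exterior algebra of $V$ and $\bigwedge^{k}V$ its degree-$k$ component. The paper assumes throughout, for expository purposes, that the characteristic of $\mathbb{F}$ is not $2$. *)

theory Defs
  imports Main "HOL-Library.Function_Algebras" HOL.Vector_Spaces
begin

text \<open>Concrete model of the exterior algebra of V = F^n with basis e_0, ..., e_(n-1).
  An element of the exterior algebra is a coefficient function on finite subsets
  S of {0..<n}: x S is the coefficient of e_(s1) wedge ... wedge e_(sj), where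
  s1 < ... < sj enumerate S.\<close>

definition fscale :: "'a::field \<Rightarrow> ('b \<Rightarrow> 'a) \<Rightarrow> ('b \<Rightarrow> 'a)" where
  "fscale c x = (\<lambda>S. c * x S)"

interpretation fvs: vector_space "fscale :: 'a::field \<Rightarrow> ('b \<Rightarrow> 'a) \<Rightarrow> ('b \<Rightarrow> 'a)"
  by unfold_locales (auto simp: fscale_def fun_eq_iff algebra_simps)

definition extpow :: "nat \<Rightarrow> nat \<Rightarrow> (nat set \<Rightarrow> 'a::field) set" where
  "extpow n k = {x. \<forall>S. x S \<noteq> 0 \<longrightarrow> S \<subseteq> {..<n} \<and> card S = k}"

text \<open>Sign of the permutation sorting the concatenation of sorted A and sorted B.\<close>
definition shuffle_sign :: "nat set \<Rightarrow> nat set \<Rightarrow> 'a::field" where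
  "shuffle_sign A B = (-1) ^ card {(a, b). a \<in> A \<and> b \<in> B \<and> b < a}"

definition wedge :: "(nat set \<Rightarrow> 'a::field) \<Rightarrow> (nat set \<Rightarrow> 'a) \<Rightarrow> (nat set \<Rightarrow> 'a)" where
  "wedge x y = (\<lambda>S. if finite S then (\<Sum>A \<in> Pow S. shuffle_sign A (S - A) * x A * y (S - A)) else 0)"

end

(*
  Order the finite sets of indices by their binary encoding and take leading sets: by Gaussian
  elimination the leading sets of L are dim L many k-sets, and they pairwise intersect, because
  for x, y in L with disjoint leading sets the coefficient of x \<and> y at the union of the two
  leading sets is a product of the two leading coefficients. By the uniqueness part of the
  Erdos-Ko-Rado theorem (proved by shifting) these leading sets form the full star of some c.
  Hence for every (k-1)-set B avoiding c some x_B in L has contraction e_B with respect to e_c.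
  Isotropy relations among the x_B and connectivity of the Kneser graph show that the x_B are
  v \<and> e_B for a single vector v with v_c = 1, and v annihilates L since the x_B span L.
*)
theory Submission
  imports Defs "HOL-Library.Nat_Bijection" "HOL-Library.Indicator_Function"
begin

section \<open>Intersecting families of \<open>k\<close>-sets\<close>

definition k_subsets :: "'a set \<Rightarrow> nat \<Rightarrow> 'a set set" where
  "k_subsets Y r = {B. B \<subseteq> Y \<and> card B = r}"

definition intersecting :: "'a set set \<Rightarrow> bool" where
  "intersecting F \<longleftrightarrow> (\<forall>A\<in>F. \<forall>B\<in>F. A \<inter> B \<noteq> {})"

lemma finite_k_subsets: "finite Y \<Longrightarrow> finite (k_subsets Y r)"
  unfolding k_subsets_def by (rule finite_subset[of _ "Pow Y"]) auto

lemma card_k_subsets: "finite Y \<Longrightarrow> card (k_subsets Y r) = card Y choose r"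
  unfolding k_subsets_def by (rule n_subsets)

lemma k_subsets_finite: "A \<in> k_subsets Y r \<Longrightarrow> finite Y \<Longrightarrow> finite A"
  unfolding k_subsets_def by (auto intro: finite_subset)

lemma finite_family_k_subsets: "F \<subseteq> k_subsets Y r \<Longrightarrow> finite Y \<Longrightarrow> finite F"
  using finite_k_subsets finite_subset by blast

lemma card_star:
  assumes "finite Y" "c \<in> Y" "1 \<le> r"
  shows "card {B \<in> k_subsets Y r. c \<in> B} = (card Y - 1) choose (r - 1)"
proof -
  have "bij_betw (insert c) (k_subsets (Y - {c}) (r - 1)) {B \<in> k_subsets Y r. c \<in> B}"
  proof (rule bij_betw_byWitness[where f' = "\<lambda>B. B - {c}"])
    show "(\<lambda>B. B - {c}) ` {B \<in> k_subsets Y r. c \<in> B} \<subseteq> k_subsets (Y - {c}) (r - 1)"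
      using assms(1) by (auto simp: k_subsets_def intro: finite_subset)
    show "insert c ` k_subsets (Y - {c}) (r - 1) \<subseteq> {B \<in> k_subsets Y r. c \<in> B}"
      using assms by (auto simp: k_subsets_def card_insert_if finite_subset)
  qed (auto simp: k_subsets_def)
  then have "card {B \<in> k_subsets Y r. c \<in> B} = card (k_subsets (Y - {c}) (r - 1))"
    by (simp add: bij_betw_same_card)
  also have "\<dots> = (card Y - 1) choose (r - 1)"
    using assms by (simp add: card_k_subsets)
  finally show ?thesis .
qed

lemma star_eqI:
  assumes "finite Y" "c \<in> Y" "1 \<le> r" and F: "F \<subseteq> {B \<in> k_subsets Y r. c \<in> B}"
    and card: "card F = (card Y - 1) choose (r - 1)"
  shows "F = {B \<in> k_subsets Y r. c \<in> B}"
  using F card card_star[OF assms(1-3)] finite_k_subsets[OF assms(1)]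
  by (intro card_subset_eq) auto

lemma intersecting_subset: "intersecting F \<Longrightarrow> G \<subseteq> F \<Longrightarrow> intersecting G"
  unfolding intersecting_def by blast

lemma intersecting_empty_notin: "intersecting F \<Longrightarrow> {} \<notin> F"
  unfolding intersecting_def by auto

text \<open>Complementation maps an intersecting family into \<open>k_subsets Y k\<close>, disjointly from itself.\<close>
lemma intersecting_half_card_le:
  assumes Y: "finite Y" "card Y = 2 * k" and F: "F \<subseteq> k_subsets Y k"
    and I: "intersecting F" and k: "1 \<le> k"
  shows "card F \<le> (2 * k - 1) choose (k - 1)"
proof -
  let ?c = "\<lambda>A. Y - A"
  have fF: "finite F" using F Y(1) by (rule finite_family_k_subsets)
  have "Y - (Y - A) = A" if "A \<in> F" for A
    using that F by (auto simp: k_subsets_def)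
  then have inj: "inj_on ?c F" by (rule inj_on_inverseI)
  have "?c ` F \<subseteq> k_subsets Y k"
    using F Y by (auto simp: k_subsets_def card_Diff_subset finite_subset)
  moreover have "F \<inter> ?c ` F = {}"
    using I unfolding intersecting_def by auto
  ultimately have "card (F \<union> ?c ` F) \<le> card (k_subsets Y k)"
    using F Y(1) by (intro card_mono finite_k_subsets) auto
  moreover have "card (F \<union> ?c ` F) = card F + card F"
    using \<open>F \<inter> ?c ` F = {}\<close> fF card_image[OF inj] by (simp add: card_Un_disjoint)
  moreover have "card (k_subsets Y k) = 2 * ((2 * k - 1) choose (k - 1))"
  proof -
    obtain m where m: "k = Suc m" using k by (cases k) auto
    have "(2 * m + 1) choose (Suc m) = (2 * m + 1) choose m"
      using binomial_symmetric[of "Suc m" "2 * m + 1"] by simp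
    then show ?thesis using Y m by (simp add: card_k_subsets)
  qed
  ultimately show ?thesis by simp
qed

section \<open>Connectivity of Kneser graphs\<close>

lemma kneser_swap:
  assumes Y: "finite Y" "2 * r < card Y" and Q: "Q \<subseteq> k_subsets Y r"
    and closed: "\<And>X X'. X \<in> Q \<Longrightarrow> X' \<in> k_subsets Y r \<Longrightarrow> X \<inter> X' = {} \<Longrightarrow> X' \<in> Q"
    and X: "X \<in> Q" and x: "x \<in> X" and y: "y \<in> Y" "y \<notin> X"
  shows "insert y (X - {x}) \<in> Q"
proof -
  have XY: "X \<subseteq> Y" "card X = r" "finite X"
    using X Q Y by (auto simp: k_subsets_def finite_subset)
  then have "card (Y - insert y X) = card Y - Suc r"
    using Y y by (simp add: card_Diff_subset)
  then have "r \<le> card (Y - insert y X)" using Y(2) by simp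
  then obtain D where D: "D \<subseteq> Y - insert y X" "card D = r"
    by (meson obtain_subset_with_card_n)
  have "D \<in> Q" using closed[OF X] D by (auto simp: k_subsets_def)
  moreover have "card X > 0" using XY x by (auto simp: card_gt_0_iff)
  then have "card (insert y (X - {x})) = r" using XY x y by simp
  then have "insert y (X - {x}) \<in> k_subsets Y r"
    using XY x y unfolding k_subsets_def by blast
  ultimately show ?thesis using closed D by blast
qed

text \<open>Two \<open>r\<close>-sets differing in one element have a common disjoint neighbour, as \<open>2 * r < card Y\<close>.\<close>
lemma kneser_graph_connected:
  assumes Y: "finite Y" "2 * r < card Y" and Q: "Q \<subseteq> k_subsets Y r"
    and closed: "\<And>X X'. X \<in> Q \<Longrightarrow> X' \<in> k_subsets Y r \<Longrightarrow> X \<inter> X' = {} \<Longrightarrow> X' \<in> Q"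
    and X0: "X0 \<in> Q"
  shows "Q = k_subsets Y r"
proof (intro equalityI Q subsetI)
  fix X' assume X': "X' \<in> k_subsets Y r"
  have "X \<in> Q \<Longrightarrow> card (X' - X) = d \<Longrightarrow> X' \<in> Q" for X d
  proof (induction d arbitrary: X)
    case 0
    then have "X' \<subseteq> X" "card X = card X'" "finite X"
      using Q X' Y by (auto simp: k_subsets_def finite_subset)
    then show ?case using 0 by (metis card_subset_eq)
  next
    case (Suc d)
    have fin: "finite X" "finite X'" "card X = card X'"
      using Suc.prems Q X' Y by (auto simp: k_subsets_def finite_subset)
    obtain y where y: "y \<in> X'" "y \<notin> X"
      using Suc.prems(2) by (metis Diff_eq_empty_iff card.empty nat.distinct(1) subsetI)
    then obtain x where x: "x \<in> X" "x \<notin> X'"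
      using fin by (metis card_subset_eq subsetI)
    have "insert y (X - {x}) \<in> Q"
      using kneser_swap[OF Y Q closed Suc.prems(1) x(1)] y X' by (auto simp: k_subsets_def)
    moreover have "X' - insert y (X - {x}) = (X' - X) - {y}" using x y by auto
    then have "card (X' - insert y (X - {x})) = d"
      using Suc.prems(2) y by simp
    ultimately show ?case by (rule Suc.IH)
  qed
  then show "X' \<in> Q" using X0 by blast
qed

section \<open>Shifting\<close>

definition shift_set :: "'a \<Rightarrow> 'a \<Rightarrow> 'a set set \<Rightarrow> 'a set \<Rightarrow> 'a set" where
  "shift_set i j F A =
     (if j \<in> A \<and> i \<notin> A \<and> insert i (A - {j}) \<notin> F then insert i (A - {j}) else A)"

definition shift :: "'a \<Rightarrow> 'a \<Rightarrow> 'a set set \<Rightarrow> 'a set set" where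
  "shift i j F = shift_set i j F ` F"

lemma shift_set_moved:
  assumes "shift_set i j F A \<noteq> A"
  shows "j \<in> A" "i \<notin> A" "insert i (A - {j}) \<notin> F" "shift_set i j F A = insert i (A - {j})"
  using assms unfolding shift_set_def by (auto split: if_splits)

lemma inj_on_shift_set:
  assumes "i \<noteq> j" shows "inj_on (shift_set i j F) F"
proof (rule inj_onI)
  fix A B assume A: "A \<in> F" and B: "B \<in> F" and eq: "shift_set i j F A = shift_set i j F B"
  show "A = B"
  proof (cases "shift_set i j F A = A")
    case A_fixed: True
    show ?thesis
    proof (cases "shift_set i j F B = B")
      case False
      then show ?thesis using shift_set_moved(3,4)[OF False] eq A A_fixed by simp
    qed (use eq A_fixed in simp)
  next
    case A_moved: False
    show ?thesis
    proof (cases "shift_set i j F B = B")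
      case True
      then show ?thesis using shift_set_moved(3,4)[OF A_moved] eq B by simp
    next
      case False
      note mA = shift_set_moved[OF A_moved] and mB = shift_set_moved[OF False]
      have "A - {j} = B - {j}" using eq mA(2,4) mB(2,4) by (simp add: insert_ident)
      then show ?thesis using mA(1) mB(1) by (metis insert_Diff)
    qed
  qed
qed

lemma card_shift: "i \<noteq> j \<Longrightarrow> card (shift i j F) = card F"
  unfolding shift_def by (rule card_image[OF inj_on_shift_set])

lemma shift_k_subsets:
  assumes "F \<subseteq> k_subsets Y r" "i \<in> Y" "finite Y"
  shows "shift i j F \<subseteq> k_subsets Y r"
proof
  fix C assume "C \<in> shift i j F"
  then obtain A where A: "A \<in> F" "C = shift_set i j F A" unfolding shift_def by auto
  have AY: "A \<subseteq> Y" "card A = r" "finite A"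
    using A assms by (auto simp: k_subsets_def finite_subset)
  show "C \<in> k_subsets Y r"
  proof (cases "j \<in> A \<and> i \<notin> A")
    case True
    then have "card (insert i (A - {j})) = Suc (card (A - {j}))"
      by (intro card_insert_disjoint) (use AY in auto)
    also have "\<dots> = card A"
      using AY(3) True by (intro card_Suc_Diff1) auto
    finally have "card (insert i (A - {j})) = card A" .
    then show ?thesis using A AY True assms(2) unfolding shift_set_def k_subsets_def by auto
  next
    case False then show ?thesis using A AY unfolding shift_set_def k_subsets_def by auto
  qed
qed

lemma intersecting_shift:
  assumes I: "intersecting F" shows "intersecting (shift i j F)"
proof -
  have meet: "shift_set i j F A \<inter> B \<noteq> {}"
    if A: "A \<in> F" and B: "B \<in> F" and fixed: "shift_set i j F B = B" for A B
  proof (cases "shift_set i j F A = A")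
    case False
    note mA = shift_set_moved[OF False]
    show ?thesis
    proof
      assume E: "shift_set i j F A \<inter> B = {}"
      have "A \<inter> B \<noteq> {}" using I A B unfolding intersecting_def by auto
      then have "j \<in> B" "i \<notin> B" using E mA by auto
      then have "insert i (B - {j}) \<in> F" using fixed unfolding shift_set_def by (auto split: if_splits)
      moreover have "A \<inter> insert i (B - {j}) = {}" using E mA by auto
      ultimately show False using I A unfolding intersecting_def by blast
    qed
  qed (use I A B in \<open>auto simp: intersecting_def\<close>)
  show ?thesis unfolding intersecting_def shift_def
  proof (intro ballI)
    fix C D assume "C \<in> shift_set i j F ` F" "D \<in> shift_set i j F ` F"
    then obtain A B where A: "A \<in> F" "C = shift_set i j F A" and B: "B \<in> F" "D = shift_set i j F B"
      by blast
    have "shift_set i j F A \<inter> shift_set i j F B \<noteq> {}"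
    proof (cases "shift_set i j F B = B")
      case True then show ?thesis using meet[OF A(1) B(1)] by simp
    next
      case B_moved: False
      show ?thesis
      proof (cases "shift_set i j F A = A")
        case True then show ?thesis using meet[OF B(1) A(1)] by (simp add: Int_commute)
      next
        case False
        have "i \<in> shift_set i j F A" "i \<in> shift_set i j F B"
          using shift_set_moved(4)[OF False] shift_set_moved(4)[OF B_moved] by simp_all
        then show ?thesis by blast
      qed
    qed
    then show "C \<inter> D \<noteq> {}" using A(2) B(2) by simp
  qed
qed

definition shifted :: "nat set set \<Rightarrow> bool" where
  "shifted F \<longleftrightarrow> (\<forall>A\<in>F. \<forall>i j. i < j \<longrightarrow> j \<in> A \<longrightarrow> i \<notin> A \<longrightarrow> insert i (A - {j}) \<in> F)"

definition family_weight :: "nat set set \<Rightarrow> nat" where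
  "family_weight F = (\<Sum>A\<in>F. \<Sum>A)"

lemma family_weight_shift_less:
  assumes fF: "finite F" and fin: "\<forall>A\<in>F. finite A" and ij: "i < j"
    and A: "A \<in> F" and moved: "shift_set i j F A \<noteq> A"
  shows "family_weight (shift i j F) < family_weight F"
proof -
  have le: "\<Sum>(shift_set i j F B) \<le> \<Sum>B" and less: "shift_set i j F B \<noteq> B \<Longrightarrow> \<Sum>(shift_set i j F B) < \<Sum>B"
    if B: "B \<in> F" for B
  proof -
    show less: "\<Sum>(shift_set i j F B) < \<Sum>B" if B_moved: "shift_set i j F B \<noteq> B"
    proof -
      note mB = shift_set_moved[OF B_moved]
      have "finite B" using fin B by auto
      then have "\<Sum>(shift_set i j F B) = i + \<Sum>(B - {j})" "\<Sum>B = j + \<Sum>(B - {j})"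
        using mB by (simp_all add: sum.remove)
      then show ?thesis using ij by simp
    qed
    show "\<Sum>(shift_set i j F B) \<le> \<Sum>B"
    proof (cases "shift_set i j F B = B")
      case False then show ?thesis using less[OF False] by simp
    qed simp
  qed
  have "family_weight (shift i j F) = (\<Sum>B\<in>F. \<Sum>(shift_set i j F B))"
    unfolding family_weight_def shift_def using ij by (simp add: sum.reindex[OF inj_on_shift_set])
  also have "\<dots> < family_weight F"
    unfolding family_weight_def using fF A le less[OF A moved] by (intro sum_strict_mono_ex1) auto
  finally show ?thesis .
qed

section \<open>Deletion and link\<close>

definition deletion :: "'a \<Rightarrow> 'a set set \<Rightarrow> 'a set set" where
  "deletion l F = {A \<in> F. l \<notin> A}"

definition link :: "'a \<Rightarrow> 'a set set \<Rightarrow> 'a set set" where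
  "link l F = {B. l \<notin> B \<and> insert l B \<in> F}"

lemma card_deletion_link:
  assumes "finite F"
  shows "card F = card (deletion l F) + card (link l F)"
proof -
  have "bij_betw (insert l) (link l F) {A \<in> F. l \<in> A}"
    by (rule bij_betw_byWitness[where f' = "\<lambda>A. A - {l}"]) (auto simp: link_def insert_absorb)
  then have "card (link l F) = card {A \<in> F. l \<in> A}" by (rule bij_betw_same_card)
  moreover have "F = deletion l F \<union> {A \<in> F. l \<in> A}" "deletion l F \<inter> {A \<in> F. l \<in> A} = {}"
    unfolding deletion_def by auto
  moreover have "finite (deletion l F)" "finite {A \<in> F. l \<in> A}"
    using assms by (auto simp: deletion_def)
  ultimately show ?thesis by (metis card_Un_disjoint)
qed

lemma deletion_k_subsets:
  "F \<subseteq> k_subsets (insert l Y) r \<Longrightarrow> deletion l F \<subseteq> k_subsets Y r"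
  unfolding deletion_def k_subsets_def by blast

lemma link_k_subsets:
  assumes "F \<subseteq> k_subsets (insert l Y) r" "finite Y"
  shows "link l F \<subseteq> k_subsets Y (r - 1)"
proof
  fix B assume "B \<in> link l F"
  then have "l \<notin> B" "insert l B \<subseteq> insert l Y" "card (insert l B) = r"
    using assms(1) unfolding link_def k_subsets_def by auto
  moreover have "finite B" using calculation(2) assms(2) by (meson finite_insert finite_subset)
  ultimately show "B \<in> k_subsets Y (r - 1)" unfolding k_subsets_def by auto
qed

lemma intersecting_deletion: "intersecting F \<Longrightarrow> intersecting (deletion l F)"
  unfolding deletion_def by (rule intersecting_subset) auto

lemma shifted_deletion:
  assumes "shifted F" "F \<subseteq> k_subsets {..<Suc l} r"
  shows "shifted (deletion l F)"
  unfolding shifted_def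
proof (intro ballI allI impI)
  fix A i j assume A: "A \<in> deletion l F" and ij: "i < j" "j \<in> A" "i \<notin> A"
  then have "A \<subseteq> {..<Suc l}" using assms(2) unfolding deletion_def k_subsets_def by blast
  then have "j \<le> l" using ij by auto
  moreover have "insert i (A - {j}) \<in> F"
    using A ij assms(1) unfolding shifted_def deletion_def by auto
  ultimately show "insert i (A - {j}) \<in> deletion l F"
    using A ij unfolding deletion_def by auto
qed

lemma shifted_link:
  assumes "shifted F" "F \<subseteq> k_subsets {..<Suc l} r"
  shows "shifted (link l F)"
  unfolding shifted_def
proof (intro ballI allI impI)
  fix B i j assume B: "B \<in> link l F" and ij: "i < j" "j \<in> B" "i \<notin> B"
  then have "insert l B \<in> F" "l \<notin> B" unfolding link_def by auto
  moreover have "insert l B \<subseteq> {..<Suc l}" using calculation(1) assms(2) unfolding k_subsets_def by blast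
  then have "j < l" using ij \<open>l \<notin> B\<close> by (auto simp: less_Suc_eq)
  ultimately have "insert i (insert l B - {j}) \<in> F"
    using assms(1) ij unfolding shifted_def by auto
  moreover have "insert i (insert l B - {j}) = insert l (insert i (B - {j}))"
    using ij \<open>j < l\<close> by auto
  ultimately show "insert i (B - {j}) \<in> link l F"
    using ij \<open>j < l\<close> \<open>l \<notin> B\<close> unfolding link_def by auto
qed

text \<open>Two disjoint sets of the link leave room for a point \<open>x\<close>; shifting \<open>l\<close> to \<open>x\<close> in one of
  them yields a member of \<open>F\<close> disjoint from the other one extended by \<open>l\<close>.\<close>
lemma intersecting_link:
  assumes sh: "shifted F" and F: "F \<subseteq> k_subsets {..<Suc l} r" and I: "intersecting F"
    and r: "2 * r \<le> Suc l"
  shows "intersecting (link l F)"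
  unfolding intersecting_def
proof (intro ballI notI)
  fix B1 B2 assume B1: "B1 \<in> link l F" and B2: "B2 \<in> link l F" and d: "B1 \<inter> B2 = {}"
  have K: "B1 \<in> k_subsets {..<l} (r - 1)" "B2 \<in> k_subsets {..<l} (r - 1)"
    using B1 B2 link_k_subsets[of F l "{..<l}" r] F by (auto simp: lessThan_Suc)
  have "insert l B1 \<in> F" "insert l B2 \<in> F" "l \<notin> B2" using B1 B2 unfolding link_def by auto
  then have "card (insert l B1) = r" using F unfolding k_subsets_def by blast
  moreover have "finite B1" using K(1) by (rule k_subsets_finite) simp
  ultimately have "r \<noteq> 0" by (auto simp: card_gt_0_iff)
  moreover have "finite B1" "finite B2"
    using k_subsets_finite[OF K(1) finite_lessThan] k_subsets_finite[OF K(2) finite_lessThan] .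
  ultimately have "card (B1 \<union> B2) < card {..<l}"
    using K d r by (simp add: card_Un_disjoint k_subsets_def)
  then have "\<not> {..<l} \<subseteq> B1 \<union> B2"
    using \<open>finite B1\<close> \<open>finite B2\<close> by (metis card_mono finite_UnI leD)
  then obtain x where x: "x < l" "x \<notin> B1" "x \<notin> B2" by blast
  have "insert x (insert l B2 - {l}) \<in> F"
    using sh \<open>insert l B2 \<in> F\<close> x unfolding shifted_def by auto
  moreover have "insert l B1 \<inter> insert x (insert l B2 - {l}) = {}"
    using x d K \<open>l \<notin> B2\<close> by (auto simp: k_subsets_def)
  ultimately show False using I \<open>insert l B1 \<in> F\<close> unfolding intersecting_def by blast
qed

section \<open>Extremal intersecting families\<close>

lemma shifted_intersecting_card_le:
  "shifted F \<Longrightarrow> F \<subseteq> k_subsets {..<n} k \<Longrightarrow> intersecting F \<Longrightarrow> 1 \<le> k \<Longrightarrow> 2 * k \<le> n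
   \<Longrightarrow> card F \<le> (n - 1) choose (k - 1)"
proof (induction n arbitrary: k F)
  case 0 then show ?case by simp
next
  case (Suc l)
  show ?case
  proof (cases "2 * k = Suc l")
    case True
    then show ?thesis using intersecting_half_card_le[of "{..<Suc l}" k F] Suc.prems by simp
  next
    case False
    then have kl: "2 * k \<le> l" using Suc.prems by simp
    have F: "F \<subseteq> k_subsets (insert l {..<l}) k" using Suc.prems(2) by (simp add: lessThan_Suc)
    have card_F: "card F = card (deletion l F) + card (link l F)"
      using F by (intro card_deletion_link finite_family_k_subsets[of _ _ k]) auto
    have deletion: "card (deletion l F) \<le> (l - 1) choose (k - 1)"
      using Suc.IH[OF shifted_deletion deletion_k_subsets[OF F] intersecting_deletion] Suc.prems kl
      by simp
    have I_link: "intersecting (link l F)"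
      using intersecting_link[OF Suc.prems(1,2,3)] kl by simp
    show ?thesis
    proof (cases "k = 1")
      case True
      then have "link l F \<subseteq> k_subsets {..<l} 0" using link_k_subsets[OF F] by simp
      then have "link l F \<subseteq> {{}}" by (auto simp: k_subsets_def finite_subset)
      then have "link l F = {}" using intersecting_empty_notin[OF I_link] by blast
      then show ?thesis using card_F deletion True by simp
    next
      case False
      have "card (link l F) \<le> (l - 1) choose (k - 1 - 1)"
        using Suc.IH[OF shifted_link[OF Suc.prems(1,2)] link_k_subsets[OF F] I_link] False Suc.prems kl
        by simp
      moreover have "0 < l" "0 < k - 1" using False Suc.prems(4) kl by auto
      then have "((l - 1) choose (k - 1 - 1)) + ((l - 1) choose (k - 1)) = l choose (k - 1)"
        by (rule choose_reduce_nat[symmetric])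
      ultimately show ?thesis using card_F deletion by simp
    qed
  qed
qed

text \<open>A member of \<open>F\<close> avoiding \<open>0\<close> and \<open>l\<close> would be disjoint from a member
  \<open>insert l (insert 0 X)\<close> supplied by the link.\<close>
lemma star_of_link_star:
  assumes F: "F \<subseteq> k_subsets (insert l {..<l}) (Suc r)" and I: "intersecting F"
    and r: "r \<noteq> 0" "2 * Suc r < Suc l"
    and link_star: "link l F = {B \<in> k_subsets {..<l} r. 0 \<in> B}"
  shows "\<forall>A\<in>F. 0 \<in> A"
proof
  fix A assume A: "A \<in> F"
  show "0 \<in> A"
  proof (cases "l \<in> A")
    case True
    then have "A - {l} \<in> link l F" using A by (simp add: link_def insert_absorb)
    then show ?thesis using link_star by auto
  next
    case l_notin: False
    show ?thesis
    proof (rule ccontr)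
      assume "0 \<notin> A"
      moreover have "A \<subseteq> insert l {..<l}" "card A = Suc r"
        using A F unfolding k_subsets_def by blast+
      ultimately have A_sub: "A \<subseteq> {1..<l}" "card A = Suc r"
        using l_notin \<open>0 \<notin> A\<close> by (auto simp: subset_iff Suc_le_eq) (metis gr0I)
      then have "card ({1..<l} - A) = l - 1 - Suc r" by (simp add: card_Diff_subset finite_subset)
      then have "r - 1 \<le> card ({1..<l} - A)" using r(2) by simp
      then obtain X where X: "X \<subseteq> {1..<l} - A" "card X = r - 1"
        by (meson obtain_subset_with_card_n)
      have "finite X" "0 \<notin> X" "X \<subseteq> {..<l}" using X(1) by (auto intro: finite_subset)
      then have "insert 0 X \<in> link l F"
        using X(2) r(1) r(2) unfolding link_star k_subsets_def by auto
      then have "insert l (insert 0 X) \<in> F" unfolding link_def by simp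
      moreover have "A \<inter> insert l (insert 0 X) = {}" using X l_notin \<open>0 \<notin> A\<close> by auto
      ultimately show False using I A unfolding intersecting_def by blast
    qed
  qed
qed

lemma shifted_intersecting_extremal_star:
  "shifted F \<Longrightarrow> F \<subseteq> k_subsets {..<n} k \<Longrightarrow> intersecting F \<Longrightarrow> 1 \<le> k \<Longrightarrow> 2 * k < n
   \<Longrightarrow> card F = (n - 1) choose (k - 1) \<Longrightarrow> \<forall>A\<in>F. 0 \<in> A"
proof (induction k arbitrary: n F)
  case 0 then show ?case by simp
next
  case (Suc r)
  obtain l where n: "n = Suc l" using Suc.prems(5) by (cases n) auto
  have F_l: "F \<subseteq> k_subsets {..<Suc l} (Suc r)" using Suc.prems(2) n by simp
  then have F: "F \<subseteq> k_subsets (insert l {..<l}) (Suc r)" by (simp add: lessThan_Suc)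
  show ?case
  proof (cases "r = 0")
    case True
    then obtain A where FA: "F = {A}" using Suc.prems(6) by (auto simp: card_1_singleton_iff)
    then obtain j where Aj: "A = {j}"
      using Suc.prems(2) True by (auto simp: k_subsets_def card_1_singleton_iff)
    have "j = 0"
    proof (rule ccontr)
      assume "j \<noteq> 0"
      then have "insert 0 (A - {j}) \<in> F" using Suc.prems(1) FA Aj unfolding shifted_def by auto
      then show False using FA Aj \<open>j \<noteq> 0\<close> by auto
    qed
    then show ?thesis using FA Aj by simp
  next
    case r_pos: False
    have card_F: "card F = card (deletion l F) + card (link l F)"
      using F by (intro card_deletion_link finite_family_k_subsets[of _ _ "Suc r"]) auto
    have I_link: "intersecting (link l F)"
      using intersecting_link[OF Suc.prems(1) F_l Suc.prems(3)] Suc.prems(5) n by simp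
    have link: "link l F \<subseteq> k_subsets {..<l} r" using link_k_subsets[OF F] by simp
    have "card (deletion l F) \<le> (l - 1) choose r"
      using shifted_intersecting_card_le[OF shifted_deletion[OF Suc.prems(1) F_l] deletion_k_subsets[OF F]
          intersecting_deletion[OF Suc.prems(3)]] Suc.prems(5) n by simp
    moreover have "card (link l F) \<le> (l - 1) choose (r - 1)"
      using shifted_intersecting_card_le[OF shifted_link[OF Suc.prems(1) F_l] link I_link]
        r_pos Suc.prems(5) n by simp
    moreover have "((l - 1) choose (r - 1)) + ((l - 1) choose r) = l choose r"
      using r_pos Suc.prems(5) n by (intro choose_reduce_nat[symmetric]) auto
    ultimately have card_link: "card (link l F) = (l - 1) choose (r - 1)"
      using card_F Suc.prems(6) n by simp
    then have "\<forall>B\<in>link l F. 0 \<in> B"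
      using Suc.IH[OF shifted_link[OF Suc.prems(1) F_l] link I_link] r_pos Suc.prems(5) n by simp
    then have link_star: "link l F = {B \<in> k_subsets {..<l} r. 0 \<in> B}"
      using link card_link r_pos Suc.prems(5) n by (intro star_eqI) auto
    then show ?thesis using star_of_link_star[OF F Suc.prems(3) r_pos] Suc.prems(5) n by simp
  qed
qed

text \<open>The sets completed by \<open>j\<close> are closed under disjointness in the Kneser graph on \<open>Y\<close>, as
  \<open>insert i X'\<close> and \<open>insert j X\<close> cannot both lie in \<open>F\<close> for disjoint \<open>X\<close>, \<open>X'\<close>.\<close>
lemma intersecting_pair_completion_star:
  assumes Y: "finite Y" "2 * r < card Y" "i \<notin> Y" "j \<notin> Y" "i \<noteq> j"
    and F: "F \<subseteq> k_subsets (insert i (insert j Y)) (Suc r)" and meets: "\<forall>A\<in>F. i \<in> A \<or> j \<in> A"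
    and cover: "\<And>X. X \<in> k_subsets Y r \<Longrightarrow> insert i X \<in> F \<or> insert j X \<in> F"
    and I: "intersecting F"
  shows "\<exists>c. \<forall>A\<in>F. c \<in> A"
proof (rule ccontr)
  assume "\<not> (\<exists>c. \<forall>A\<in>F. c \<in> A)"
  then obtain A B where A: "A \<in> F" "i \<notin> A" and B: "B \<in> F" "j \<notin> B" by blast
  then have "j \<in> A" "i \<in> B" using meets by auto
  have minus: "C - {c} \<in> k_subsets Y r" if "C \<in> F" "c \<in> C" "({i, j} - {c}) \<inter> C = {}" for C c
  proof -
    have "C \<subseteq> insert i (insert j Y)" "card C = Suc r" using that(1) F unfolding k_subsets_def by blast+
    moreover have "c = i \<or> c = j" using that(1,2,3) meets by auto
    ultimately show ?thesis using that(2,3) Y(1) by (auto simp: k_subsets_def finite_subset)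
  qed
  define Q where "Q = {X \<in> k_subsets Y r. insert j X \<in> F}"
  have "A - {j} \<in> k_subsets Y r" using minus[OF A(1) \<open>j \<in> A\<close>] A(2) Y(5) by auto
  then have "A - {j} \<in> Q" unfolding Q_def using A(1) \<open>j \<in> A\<close> by (simp add: insert_absorb)
  moreover have "X' \<in> Q" if "X \<in> Q" "X' \<in> k_subsets Y r" "X \<inter> X' = {}" for X X'
  proof -
    have "insert i X' \<inter> insert j X = {}" using that Y(3,4,5) unfolding Q_def k_subsets_def by auto
    then have "insert i X' \<notin> F" using I that(1) unfolding Q_def intersecting_def by blast
    then show ?thesis using cover[OF that(2)] that(2) unfolding Q_def by blast
  qed
  ultimately have Q: "Q = k_subsets Y r"
    using kneser_graph_connected[OF Y(1,2), of Q] unfolding Q_def by blast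
  have B_minus: "B - {i} \<in> k_subsets Y r" using minus[OF B(1) \<open>i \<in> B\<close>] B(2) by auto
  then have "B - {i} \<subseteq> Y" "card (B - {i}) = r" by (auto simp: k_subsets_def)
  then have "card (Y - (B - {i})) = card Y - r"
    by (simp add: card_Diff_subset[OF finite_subset[OF _ Y(1)]])
  then have "r \<le> card (Y - (B - {i}))" using Y(2) by simp
  then obtain X where X: "X \<subseteq> Y - (B - {i})" "card X = r"
    by (meson obtain_subset_with_card_n)
  then have "insert j X \<in> F" using Q unfolding Q_def k_subsets_def by blast
  moreover have "B \<inter> insert j X = {}" using X B Y(3) by auto
  ultimately show False using I B(1) unfolding intersecting_def by blast
qed

lemma star_of_shift_star:
  assumes F: "F \<subseteq> k_subsets {..<n} k" and I: "intersecting F" and k: "1 \<le> k" "2 * k < n"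
    and card: "card F = (n - 1) choose (k - 1)" and ij: "i < j" "j < n"
    and star: "\<forall>A\<in>shift i j F. c \<in> A"
  shows "\<exists>c. \<forall>A\<in>F. c \<in> A"
proof (cases "c = i")
  case False
  have "c \<in> A" if "A \<in> F" for A
  proof -
    have "c \<in> shift_set i j F A" using star that unfolding shift_def by blast
    then show ?thesis using False unfolding shift_set_def by (auto split: if_splits)
  qed
  then show ?thesis by blast
next
  case True
  have "shift i j F \<subseteq> {B \<in> k_subsets {..<n} k. i \<in> B}"
    using shift_k_subsets[OF F, of i j] star True ij by auto
  then have shift_star: "shift i j F = {B \<in> k_subsets {..<n} k. i \<in> B}"
    using card card_shift[of i j F] ij k by (intro star_eqI) auto
  define Y where "Y = {..<n} - {i, j}"
  have "card Y = n - 2" using ij unfolding Y_def by (simp add: card_Diff_subset)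
  then have Y: "finite Y" "2 * (k - 1) < card Y" "i \<notin> Y" "j \<notin> Y"
    using k unfolding Y_def by auto
  have n_eq: "{..<n} = insert i (insert j Y)" using ij unfolding Y_def by auto
  show ?thesis
  proof (rule intersecting_pair_completion_star[OF Y _ _ _ _ I])
    show "i \<noteq> j" using ij by simp
    show "F \<subseteq> k_subsets (insert i (insert j Y)) (Suc (k - 1))" using F k n_eq by simp
    show "\<forall>A\<in>F. i \<in> A \<or> j \<in> A"
    proof
      fix A assume "A \<in> F"
      then have "i \<in> shift_set i j F A" using star True unfolding shift_def by blast
      then show "i \<in> A \<or> j \<in> A" unfolding shift_set_def by (auto split: if_splits)
    qed
  next
    fix X assume X: "X \<in> k_subsets Y (k - 1)"
    then have "finite X" "X \<subseteq> Y" "card X = k - 1"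
      using k_subsets_finite[OF X Y(1)] by (auto simp: k_subsets_def)
    moreover have "i \<notin> X" using \<open>X \<subseteq> Y\<close> Y(3) by blast
    ultimately have "card (insert i X) = k" using k by simp
    moreover have "insert i X \<subseteq> {..<n}" using \<open>X \<subseteq> Y\<close> ij unfolding Y_def by auto
    ultimately have "insert i X \<in> shift i j F" unfolding shift_star k_subsets_def by simp
    then obtain A where A: "A \<in> F" "shift_set i j F A = insert i X" unfolding shift_def by auto
    show "insert i X \<in> F \<or> insert j X \<in> F"
    proof (cases "shift_set i j F A = A")
      case False
      note mA = shift_set_moved[OF False]
      then have "A - {j} = X" using A(2) \<open>i \<notin> X\<close> by (simp add: insert_ident)
      then have "A = insert j X" using mA(1) by blast
      then show ?thesis using A(1) by simp
    qed (use A in simp)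
  qed
qed

text \<open>Shifting decreases \<open>family_weight\<close>, and
  \<open>star_of_shift_star\<close> transfers being a star back, so one may assume \<open>F\<close> shifted.\<close>
theorem ekr_extremal_star:
  "F \<subseteq> k_subsets {..<n} k \<Longrightarrow> intersecting F \<Longrightarrow> 1 \<le> k \<Longrightarrow> 2 * k < n
   \<Longrightarrow> card F = (n - 1) choose (k - 1) \<Longrightarrow> \<exists>c. \<forall>A\<in>F. c \<in> A"
proof (induction "family_weight F" arbitrary: F rule: less_induct)
  case less
  show ?case
  proof (cases "shifted F")
    case True
    then show ?thesis using shifted_intersecting_extremal_star[OF True less.prems] by blast
  next
    case False
    then obtain A i j where A: "A \<in> F" "i < j" "j \<in> A" "i \<notin> A" "insert i (A - {j}) \<notin> F"
      unfolding shifted_def by blast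
    then have moved: "shift_set i j F A \<noteq> A" unfolding shift_set_def by auto
    have "j < n" using A less.prems(1) by (auto simp: k_subsets_def)
    have "\<forall>B\<in>F. finite B" using less.prems(1) k_subsets_finite[of _ "{..<n}" k] by blast
    then have "family_weight (shift i j F) < family_weight F"
      using family_weight_shift_less[OF _ _ A(2,1) moved] less.prems(1)
      by (simp add: finite_family_k_subsets)
    moreover have "shift i j F \<subseteq> k_subsets {..<n} k"
      using shift_k_subsets[OF less.prems(1)] A(2) \<open>j < n\<close> by simp
    ultimately obtain c where "\<forall>B\<in>shift i j F. c \<in> B"
      using less.hyps[of "shift i j F"] intersecting_shift[OF less.prems(2)] less.prems(3-5)
        card_shift[of i j F] A(2) by auto
    then show ?thesis using star_of_shift_star[OF less.prems A(2) \<open>j < n\<close>] by blast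
  qed
qed

section \<open>Shuffle signs\<close>

lemma shuffle_sign_eq: "shuffle_sign A B = (-1) ^ card {p \<in> A \<times> B. snd p < fst p}"
proof -
  have "{(a, b). a \<in> A \<and> b \<in> B \<and> b < a} = {p \<in> A \<times> B. snd p < fst p}" by auto
  then show ?thesis unfolding shuffle_sign_def by simp
qed

lemma shuffle_sign_square [simp]: "shuffle_sign A B * shuffle_sign A B = (1::'a::field)"
  unfolding shuffle_sign_def by (simp flip: power_add)

lemma shuffle_sign_nonzero [simp]: "shuffle_sign A B \<noteq> (0::'a::field)"
  unfolding shuffle_sign_def by simp

lemma shuffle_sign_union_left:
  assumes "finite A" "finite B" "finite C" "A \<inter> B = {}"
  shows "shuffle_sign (A \<union> B) C = shuffle_sign A C * (shuffle_sign B C :: 'a::field)"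
proof -
  have "{p \<in> (A \<union> B) \<times> C. snd p < fst p} = {p \<in> A \<times> C. snd p < fst p} \<union> {p \<in> B \<times> C. snd p < fst p}"
    by blast
  moreover have "card \<dots> = card {p \<in> A \<times> C. snd p < fst p} + card {p \<in> B \<times> C. snd p < fst p}"
    using assms by (intro card_Un_disjoint) auto
  ultimately show ?thesis unfolding shuffle_sign_eq by (simp add: power_add)
qed

lemma shuffle_sign_union_right:
  assumes "finite A" "finite B" "finite C" "B \<inter> C = {}"
  shows "shuffle_sign A (B \<union> C) = shuffle_sign A B * (shuffle_sign A C :: 'a::field)"
proof -
  have "{p \<in> A \<times> (B \<union> C). snd p < fst p} = {p \<in> A \<times> B. snd p < fst p} \<union> {p \<in> A \<times> C. snd p < fst p}"
    by blast
  moreover have "card \<dots> = card {p \<in> A \<times> B. snd p < fst p} + card {p \<in> A \<times> C. snd p < fst p}"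
    using assms by (intro card_Un_disjoint) auto
  ultimately show ?thesis unfolding shuffle_sign_eq by (simp add: power_add)
qed

text \<open>Every pair of \<open>A \<times> B\<close> is an inversion of exactly one of the two shuffles.\<close>
lemma shuffle_sign_swap:
  assumes "finite A" "finite B" "A \<inter> B = {}"
  shows "shuffle_sign A B * shuffle_sign B A = ((-1) ^ (card A * card B) :: 'a::field)"
proof -
  let ?I = "{p \<in> A \<times> B. snd p < fst p}" and ?J = "{p \<in> A \<times> B. fst p < snd p}"
  have "card {p \<in> B \<times> A. snd p < fst p} = card ?J"
    by (rule bij_betw_same_card[of prod.swap]) (auto simp: bij_betw_def image_iff)
  moreover have "card A * card B = card (?I \<union> ?J)"
  proof -
    have "A \<times> B = ?I \<union> ?J" using assms(3) by (auto simp: linorder_neq_iff)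
    then show ?thesis by (simp add: card_cartesian_product)
  qed
  moreover have "card (?I \<union> ?J) = card ?I + card ?J"
    using assms by (intro card_Un_disjoint) auto
  ultimately show ?thesis unfolding shuffle_sign_eq by (simp flip: power_add)
qed

lemma shuffle_sign_singletons:
  "shuffle_sign {p} {q} = (if q < p then -1 else (1::'a::field))"
proof -
  have "{(a, b). a \<in> {p} \<and> b \<in> {q} \<and> b < a} = (if q < p then {(p, q)} else {})" by auto
  then show ?thesis unfolding shuffle_sign_def by simp
qed

lemma shuffle_sign_singletons_swap:
  "p \<noteq> q \<Longrightarrow> shuffle_sign {p} {q} = - (shuffle_sign {q} {p} :: 'a::field)"
  by (auto simp: shuffle_sign_singletons)

lemma shuffle_sign_exchange_singletons:
  assumes "finite B" "p \<noteq> q" "p \<notin> B" "q \<notin> B"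
  shows "shuffle_sign {p} (insert q B) * shuffle_sign {q} B
       = - (shuffle_sign {q} (insert p B) * (shuffle_sign {p} B :: 'a::field))"
proof -
  have "shuffle_sign {p} (insert q B) = shuffle_sign {p} {q} * (shuffle_sign {p} B :: 'a)"
    "shuffle_sign {q} (insert p B) = shuffle_sign {q} {p} * (shuffle_sign {q} B :: 'a)"
    using assms shuffle_sign_union_right[of "{p}" "{q}" B] shuffle_sign_union_right[of "{q}" "{p}" B]
    by simp_all
  then show ?thesis using shuffle_sign_singletons_swap[OF assms(2), where 'a = 'a] by simp
qed

lemma shuffle_sign_exchange:
  assumes "finite B" "finite C" "B \<inter> C = {}" "c \<noteq> j" "c \<notin> B" "c \<notin> C" "j \<notin> B" "j \<notin> C"
  shows "shuffle_sign (insert c B) (insert j C) * shuffle_sign {c} B * shuffle_sign {j} C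
       = - (shuffle_sign (insert j B) (insert c C) * shuffle_sign {c} C * (shuffle_sign {j} B :: 'a::field))"
proof -
  have split: "shuffle_sign (insert p B) (insert q C)
      = shuffle_sign {p} {q} * shuffle_sign {p} C * shuffle_sign B {q} * (shuffle_sign B C :: 'a)"
    if "p \<notin> B" "p \<notin> C" "q \<notin> B" "q \<notin> C" for p q
  proof -
    have "shuffle_sign (insert p B) (insert q C) = shuffle_sign {p} (insert q C) * (shuffle_sign B (insert q C) :: 'a)"
      using assms(1,2) that shuffle_sign_union_left[of "{p}" B "insert q C", where 'a = 'a] by simp
    also have "\<dots> = (shuffle_sign {p} {q} * shuffle_sign {p} C) * (shuffle_sign B {q} * shuffle_sign B C)"
      using assms(1,2) that shuffle_sign_union_right[of "{p}" "{q}" C, where 'a = 'a]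
        shuffle_sign_union_right[of B "{q}" C, where 'a = 'a]
      by simp
    finally show ?thesis by (simp add: mult_ac)
  qed
  have "shuffle_sign B {j} * shuffle_sign {j} B = ((-1) ^ card B :: 'a)"
    "shuffle_sign B {c} * shuffle_sign {c} B = ((-1) ^ card B :: 'a)"
    using shuffle_sign_swap[of B "{j}"] shuffle_sign_swap[of B "{c}"] assms by auto
  moreover have "((-1) ^ card B :: 'a) * (-1) ^ card B = 1" by (simp flip: power_add)
  moreover have "a * y = x * b" if "a * b = s" "x * y = s" "s * s = 1" "b * b = 1" "x * x = 1"
    for a b x y s :: 'a
  proof -
    have "a * y = (a * y) * (b * b) * (x * x)" using that by simp
    also have "\<dots> = (a * b) * (x * y) * (x * b)" by (simp add: ac_simps)
    also have "\<dots> = x * b" using that by simp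
    finally show ?thesis .
  qed
  ultimately have "shuffle_sign B {j} * shuffle_sign {c} B = shuffle_sign B {c} * (shuffle_sign {j} B :: 'a)"
    using shuffle_sign_square[of "{j}" B, where 'a = 'a] shuffle_sign_square[of B "{c}", where 'a = 'a]
    by blast
  then show ?thesis
    using split[of c j] split[of j c] assms shuffle_sign_singletons_swap[OF assms(4), where 'a = 'a]
    by simp
qed

section \<open>Leading sets\<close>

lemma extpow_support: "x \<in> extpow n k \<Longrightarrow> x S \<noteq> 0 \<Longrightarrow> S \<in> k_subsets {..<n} k"
  unfolding extpow_def k_subsets_def by auto

lemma extpow_support_finite: "x \<in> extpow n k \<Longrightarrow> x S \<noteq> 0 \<Longrightarrow> finite S"
  using extpow_support k_subsets_finite by blast

lemma finite_extpow_support: "x \<in> extpow n k \<Longrightarrow> finite {S. x S \<noteq> 0}"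
  using extpow_support[of x n k] finite_k_subsets[of "{..<n}" k] by (auto intro: finite_subset)

text \<open>Sets are ordered by their binary encoding \<open>set_encode S = (\<Sum>s\<in>S. 2 ^ s)\<close>, a total order
  on finite sets compatible with disjoint unions.\<close>
definition lead :: "(nat set \<Rightarrow> 'a::zero) \<Rightarrow> nat set" where
  "lead x = arg_min_on set_encode {S. x S \<noteq> 0}"

lemma
  assumes "x \<in> extpow n k" "x \<noteq> 0"
  shows lead_nonzero: "x (lead x) \<noteq> 0"
    and lead_le: "x T \<noteq> 0 \<Longrightarrow> set_encode (lead x) \<le> set_encode T"
proof -
  have "{S. x S \<noteq> 0} \<noteq> {}" using assms(2) by auto
  then show "x (lead x) \<noteq> 0" "x T \<noteq> 0 \<Longrightarrow> set_encode (lead x) \<le> set_encode T"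
    unfolding lead_def using arg_min_if_finite(1) arg_min_least finite_extpow_support[OF assms(1)]
    by fastforce+
qed

lemma lead_k_subsets: "x \<in> extpow n k \<Longrightarrow> x \<noteq> 0 \<Longrightarrow> lead x \<in> k_subsets {..<n} k"
  using lead_nonzero extpow_support by blast

lemma lead_less:
  assumes x: "x \<in> extpow n k" and T: "x T \<noteq> 0" "T \<noteq> lead x"
  shows "set_encode (lead x) < set_encode T"
proof -
  have "x \<noteq> 0" using T by auto
  then have "set_encode (lead x) \<le> set_encode T" "finite (lead x)" "finite T"
    using lead_le lead_nonzero extpow_support_finite x T by blast+
  then show ?thesis using T(2) set_encode_eq by (metis le_neq_implies_less)
qed

lemma lead_eqI:
  assumes x: "x \<in> extpow n k" and S: "x S \<noteq> 0" and min: "\<And>T. x T \<noteq> 0 \<Longrightarrow> set_encode S \<le> set_encode T"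
  shows "lead x = S"
  using lead_less[OF x S] min[OF lead_nonzero[OF x]] S by fastforce

definition lead_sets :: "(nat set \<Rightarrow> 'a::zero) set \<Rightarrow> nat set set" where
  "lead_sets L = {lead x | x. x \<in> L \<and> x \<noteq> 0}"

lemma lead_sets_k_subsets: "L \<subseteq> extpow n k \<Longrightarrow> lead_sets L \<subseteq> k_subsets {..<n} k"
  unfolding lead_sets_def using lead_k_subsets by blast

text \<open>The leading sets of \<open>x\<close> and \<open>y\<close> contribute the only term of \<open>x \<and> y\<close> at their union:
  any other splitting \<open>A' \<union> (S - A')\<close> would have smaller encoding in one of the two factors.\<close>
lemma wedge_at_lead_union:
  fixes x y :: "nat set \<Rightarrow> 'a::field"
  assumes x: "x \<in> extpow n k" "x \<noteq> 0" and y: "y \<in> extpow m l" "y \<noteq> 0"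
    and disj: "lead x \<inter> lead y = {}"
  shows "wedge x y (lead x \<union> lead y) = shuffle_sign (lead x) (lead y) * x (lead x) * y (lead y)"
proof -
  define A B where "A = lead x" and "B = lead y"
  have fin: "finite A" "finite B"
    unfolding A_def B_def using lead_nonzero extpow_support_finite x y by blast+
  let ?f = "\<lambda>A'. shuffle_sign A' (A \<union> B - A') * x A' * y (A \<union> B - A')"
  have "?f A' = 0" if A': "A' \<subseteq> A \<union> B" "A' \<noteq> A" for A'
  proof (rule ccontr)
    assume "?f A' \<noteq> 0"
    then have x': "x A' \<noteq> 0" and y': "y (A \<union> B - A') \<noteq> 0" by auto
    have "finite A'" using A' fin by (auto intro: finite_subset)
    then have "set_encode (A \<union> B) = set_encode A' + set_encode (A \<union> B - A')"
      using A'(1) fin by (metis set_encode_def sum.subset_diff finite_Un add.commute)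
    moreover have "set_encode (A \<union> B) = set_encode A + set_encode B"
      using fin disj unfolding A_def B_def set_encode_def by (simp add: sum.union_disjoint)
    moreover have "set_encode A < set_encode A'" using lead_less[OF x(1) x'] A' A_def by blast
    moreover have "set_encode B \<le> set_encode (A \<union> B - A')" using lead_le[OF y y'] B_def by blast
    ultimately show False by linarith
  qed
  then have "wedge x y (A \<union> B) = ?f A"
    unfolding wedge_def using fin by (simp add: sum.mono_neutral_right[of "Pow (A \<union> B)" "{A}"])
  moreover have "A \<union> B - A = B" using disj A_def B_def by auto
  ultimately show ?thesis unfolding A_def B_def by simp
qed

lemma intersecting_lead_sets:
  fixes L :: "(nat set \<Rightarrow> 'a::field) set"
  assumes "L \<subseteq> extpow n k" and isotropic: "\<forall>x\<in>L. \<forall>y\<in>L. wedge x y = 0"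
  shows "intersecting (lead_sets L)"
  unfolding intersecting_def
proof (intro ballI notI)
  fix A B assume "A \<in> lead_sets L" "B \<in> lead_sets L" and disj: "A \<inter> B = {}"
  then obtain x y where xy: "x \<in> L" "x \<noteq> 0" "A = lead x" "y \<in> L" "y \<noteq> 0" "B = lead y"
    unfolding lead_sets_def by auto
  moreover have "x \<in> extpow n k" "y \<in> extpow n k" using xy assms(1) by auto
  ultimately have "wedge x y (A \<union> B) \<noteq> 0"
    using wedge_at_lead_union[of x n k y n k] lead_nonzero[of x n k] lead_nonzero[of y n k] disj
    by simp
  then show False using isotropic xy by simp
qed

lemma sum_fun_apply: "(\<Sum>i\<in>I. f i) x = (\<Sum>i\<in>I. f i x)"
  by (induction I rule: infinite_finite_induct) auto

lemma subspace_extpow: "fvs.subspace (extpow n k :: (nat set \<Rightarrow> 'a::field) set)"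
  unfolding fvs.subspace_def
proof (intro conjI ballI allI)
  fix x y :: "nat set \<Rightarrow> 'a" assume "x \<in> extpow n k" "y \<in> extpow n k"
  moreover have "x S \<noteq> 0 \<or> y S \<noteq> 0" if "(x + y) S \<noteq> 0" for S using that by auto
  ultimately show "x + y \<in> extpow n k" unfolding extpow_def by blast
qed (auto simp: extpow_def fscale_def)

lemma linear_wedge_right: "Vector_Spaces.linear fscale fscale (wedge v)"
  unfolding Vector_Spaces.linear_def
proof (intro conjI fvs.vector_space_axioms)
  show "module_hom fscale fscale (wedge v)"
    by unfold_locales
      (auto simp: wedge_def fscale_def fun_eq_iff algebra_simps sum.distrib sum_distrib_left)
qed

lemma lead_cancel:
  fixes x y :: "nat set \<Rightarrow> 'a::field"
  defines "x' \<equiv> x - fscale (x (lead x) / y (lead x)) y"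
  assumes x: "x \<in> extpow n k" "x \<noteq> 0" and y: "y \<in> extpow n k" "y \<noteq> 0" and eq: "lead y = lead x"
    and nz: "x' \<noteq> 0"
  shows "set_encode (lead x) < set_encode (lead x')"
proof -
  have x': "x' \<in> extpow n k"
    unfolding x'_def by (rule fvs.subspace_diff[OF subspace_extpow x(1) fvs.subspace_scale[OF subspace_extpow y(1)]])
  have "y (lead x) \<noteq> 0" using lead_nonzero[OF y] eq by simp
  then have "x' (lead x) = 0" unfolding x'_def fscale_def by simp
  moreover have "x' (lead x') \<noteq> 0" by (rule lead_nonzero[OF x' nz])
  moreover have "x (lead x') \<noteq> 0 \<or> y (lead x') \<noteq> 0"
    using calculation(2) unfolding x'_def fscale_def by auto
  then have "set_encode (lead x) \<le> set_encode (lead x')"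
    using lead_le[OF x] lead_le[OF y] eq by auto
  moreover have "finite (lead x)" "finite (lead x')"
    using extpow_support_finite[OF x(1) lead_nonzero[OF x]] extpow_support_finite[OF x' lead_nonzero[OF x' nz]] .
  ultimately show ?thesis using set_encode_eq by (metis le_neq_implies_less)
qed

text \<open>Consider a counterexample whose leading set has maximal encoding; cancelling its leading
  term against \<open>Y\<close> gives a counterexample with a larger one.\<close>
lemma subspace_subset_span_lead_cover:
  fixes M Y :: "(nat set \<Rightarrow> 'a::field) set"
  assumes M: "M \<subseteq> extpow n k" "fvs.subspace M" and Y: "Y \<subseteq> M"
    and cover: "\<And>x. x \<in> M \<Longrightarrow> x \<noteq> 0 \<Longrightarrow> \<exists>y\<in>Y. y \<noteq> 0 \<and> lead y = lead x"
  shows "M \<subseteq> fvs.span Y"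
proof (rule ccontr)
  let ?bad = "M - fvs.span Y"
  assume "\<not> M \<subseteq> fvs.span Y"
  then have "?bad \<noteq> {}" by blast
  moreover have "set_encode ` lead ` ?bad \<subseteq> set_encode ` k_subsets {..<n} k"
    using M(1) fvs.span_zero lead_k_subsets by blast
  then have fin: "finite (set_encode ` lead ` ?bad)" by (rule finite_subset) (simp add: finite_k_subsets)
  define m where "m = Max (set_encode ` lead ` ?bad)"
  have "m \<in> set_encode ` lead ` ?bad" unfolding m_def using fin \<open>?bad \<noteq> {}\<close> by (intro Max_in) auto
  then obtain x where x: "x \<in> ?bad" "set_encode (lead x) = m" by blast
  have max: "set_encode (lead z) \<le> set_encode (lead x)" if "z \<in> ?bad" for z
    unfolding x(2) m_def using fin that by (intro Max_ge) auto
  have xE: "x \<in> extpow n k" "x \<noteq> 0" using x M(1) fvs.span_zero by auto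
  obtain y where y: "y \<in> Y" "y \<noteq> 0" "lead y = lead x" using cover x xE by blast
  define x' where "x' = x - fscale (x (lead x) / y (lead x)) y"
  have "y \<in> fvs.span Y" using y by (simp add: fvs.span_base)
  have "x' \<notin> fvs.span Y"
  proof
    assume "x' \<in> fvs.span Y"
    then have "x' + fscale (x (lead x) / y (lead x)) y \<in> fvs.span Y"
      using \<open>y \<in> fvs.span Y\<close> by (intro fvs.span_add fvs.span_scale)
    then show False using x(1) unfolding x'_def by simp
  qed
  moreover have "x' \<in> M"
    unfolding x'_def using M(2) x y Y by (auto intro: fvs.subspace_diff fvs.subspace_scale)
  ultimately have x'_bad: "x' \<in> ?bad" by blast
  then have "x' \<noteq> 0" using fvs.span_zero by auto
  then have "set_encode (lead x) < set_encode (lead x')"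
    using lead_cancel[OF xE _ y(2,3)] y(1) Y M(1) unfolding x'_def by auto
  then show False using max[OF x'_bad] by simp
qed

text \<open>In a vanishing combination, the coefficient at the smallest leading set involved sees only
  one vector.\<close>
lemma independent_distinct_leads:
  fixes Y :: "(nat set \<Rightarrow> 'a::field) set"
  assumes Y: "Y \<subseteq> extpow n k" "0 \<notin> Y" and inj: "inj_on lead Y"
  shows "fvs.independent Y"
  unfolding fvs.independent_explicit_finite_subsets
proof (intro allI impI ballI)
  fix S u v assume S: "S \<subseteq> Y" "finite S" and sum0: "(\<Sum>v\<in>S. fscale (u v) v) = 0" and v: "v \<in> S"
  show "u v = 0"
  proof (rule ccontr)
    assume "u v \<noteq> 0"
    let ?E = "(\<lambda>w. set_encode (lead w)) ` {w \<in> S. u w \<noteq> 0}"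
    have fin: "finite ?E" using S(2) by simp
    have "set_encode (lead v) \<in> ?E" using v \<open>u v \<noteq> 0\<close> by (intro imageI) simp
    then have "Min ?E \<in> ?E" using fin by (intro Min_in) auto
    then obtain w0 where w0: "w0 \<in> S" "u w0 \<noteq> 0" "set_encode (lead w0) = Min ?E"
      by (auto elim!: imageE)
    have wE: "w \<in> extpow n k" "w \<noteq> 0" if "w \<in> S" for w using that S Y by auto
    have others: "u w * w (lead w0) = 0" if w: "w \<in> S" "w \<noteq> w0" for w
    proof (rule ccontr)
      assume "u w * w (lead w0) \<noteq> 0"
      then have "u w \<noteq> 0" "w (lead w0) \<noteq> 0" by auto
      then have "set_encode (lead w) \<in> ?E" using w(1) by (intro imageI) simp
      then have "set_encode (lead w0) \<le> set_encode (lead w)"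
        unfolding w0(3) by (rule Min_le[OF fin])
      moreover have "lead w \<noteq> lead w0" using inj_onD[OF inj _ S(1)[THEN subsetD, OF w(1)]] S(1) w0(1) w(2) by blast
      ultimately have "set_encode (lead w0) \<le> set_encode (lead w)" "lead w \<noteq> lead w0" .
      then show False using lead_less[OF wE(1)[OF w(1)] \<open>w (lead w0) \<noteq> 0\<close>] by simp
    qed
    have "(\<Sum>w\<in>S. u w * w (lead w0)) = u w0 * w0 (lead w0) + (\<Sum>w\<in>S - {w0}. u w * w (lead w0))"
      using S(2) w0(1) by (rule sum.remove)
    also have "(\<Sum>w\<in>S - {w0}. u w * w (lead w0)) = 0" using others by (intro sum.neutral) blast
    finally have "(\<Sum>w\<in>S. u w * w (lead w0)) = u w0 * w0 (lead w0)" by simp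
    moreover have "(\<Sum>w\<in>S. u w * w (lead w0)) = 0"
      using fun_cong[OF sum0, of "lead w0"] by (simp add: fscale_def sum_fun_apply)
    ultimately show False using w0(2) lead_nonzero[OF wE[OF w0(1)]] by simp
  qed
qed

lemma card_lead_sets:
  fixes L :: "(nat set \<Rightarrow> 'a::field) set"
  assumes L: "L \<subseteq> extpow n k" "fvs.subspace L"
  shows "card (lead_sets L) = fvs.dim L"
proof -
  have "\<forall>A\<in>lead_sets L. \<exists>x. x \<in> L \<and> x \<noteq> 0 \<and> lead x = A" unfolding lead_sets_def by auto
  then obtain y where y: "\<And>A. A \<in> lead_sets L \<Longrightarrow> y A \<in> L \<and> y A \<noteq> 0 \<and> lead (y A) = A"
    by metis
  have inj: "inj_on y (lead_sets L)" by (rule inj_onI) (metis y)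
  have YL: "y ` lead_sets L \<subseteq> L" using y by auto
  have "L \<subseteq> fvs.span (y ` lead_sets L)"
  proof (rule subspace_subset_span_lead_cover[OF L YL])
    fix x assume "x \<in> L" "x \<noteq> 0"
    then have "lead x \<in> lead_sets L" unfolding lead_sets_def by auto
    then show "\<exists>z\<in>y ` lead_sets L. z \<noteq> 0 \<and> lead z = lead x" using y by blast
  qed
  moreover have "inj_on lead (y ` lead_sets L)"
    by (rule inj_on_imageI2) (auto intro!: inj_onI simp: y)
  then have "fvs.independent (y ` lead_sets L)"
    using y L(1) by (intro independent_distinct_leads[of _ n k]) auto
  ultimately have "card (y ` lead_sets L) = fvs.dim L" using fvs.basis_card_eq_dim[OF YL] by blast
  then show ?thesis using card_image[OF inj] by simp
qed

section \<open>Contraction\<close>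

text \<open>The coefficient of \<open>e\<^sub>c \<and> e\<^sub>B\<close> in \<open>x\<close>, since \<open>e\<^sub>c \<and> e\<^sub>B = shuffle_sign {c} B \<cdot> e\<^bsub>insert c B\<^esub>\<close>
  and signs square to one.\<close>
definition contract :: "nat \<Rightarrow> (nat set \<Rightarrow> 'a::field) \<Rightarrow> nat set \<Rightarrow> 'a" where
  "contract c x B = (if c \<in> B then 0 else shuffle_sign {c} B * x (insert c B))"

lemma linear_contract: "Vector_Spaces.linear fscale fscale (contract c)"
  unfolding Vector_Spaces.linear_def
proof (intro conjI fvs.vector_space_axioms)
  show "module_hom fscale fscale (contract c)"
    by unfold_locales (auto simp: contract_def fscale_def fun_eq_iff algebra_simps)
qed

lemma contract_extpow:
  assumes "x \<in> extpow n k" shows "contract c x \<in> extpow n (k - 1)"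
  unfolding extpow_def
proof (intro CollectI allI impI)
  fix B assume "contract c x B \<noteq> 0"
  then have "c \<notin> B" "insert c B \<in> k_subsets {..<n} k"
    using extpow_support[OF assms] unfolding contract_def by (auto split: if_splits)
  then show "B \<subseteq> {..<n} \<and> card B = k - 1"
    by (auto simp: k_subsets_def card_insert_if finite_subset split: if_splits)
qed

lemma lead_contract:
  assumes x: "x \<in> extpow n k" "x \<noteq> 0" and c: "c \<in> lead x"
  shows "lead (contract c x) = lead x - {c}"
proof (rule lead_eqI[OF contract_extpow[OF x(1)]])
  have fin: "finite (lead x)" using extpow_support_finite[OF x(1) lead_nonzero[OF x]] .
  have ins: "insert c (lead x - {c}) = lead x" using c by auto
  show "contract c x (lead x - {c}) \<noteq> 0"
    unfolding contract_def using lead_nonzero[OF x] ins by simp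
  fix T assume T: "contract c x T \<noteq> 0"
  then have "c \<notin> T" "x (insert c T) \<noteq> 0" unfolding contract_def by (auto split: if_splits)
  moreover from this(2) have "finite T" using extpow_support_finite[OF x(1)] by fastforce
  ultimately have "set_encode (lead x) \<le> 2 ^ c + set_encode T"
    using lead_le[OF x] by fastforce
  moreover have "set_encode (lead x) = 2 ^ c + set_encode (lead x - {c})"
    using fin ins by (metis finite_Diff set_encode_insert Diff_iff singletonI)
  ultimately show "set_encode (lead x - {c}) \<le> set_encode T" by simp
qed

section \<open>Isotropic subspaces whose leading sets form a full star\<close>

locale lead_star =
  fixes L :: "(nat set \<Rightarrow> 'a::field) set" and n k c :: nat
  assumes L_extpow: "L \<subseteq> extpow n k" and L_subspace: "fvs.subspace L"
    and isotropic: "\<forall>x\<in>L. \<forall>y\<in>L. wedge x y = 0"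
    and k: "1 \<le> k" "2 * k < n" and c: "c < n"
    and lead_sets_star: "lead_sets L = {A \<in> k_subsets {..<n} k. c \<in> A}"
begin

interpretation contract: Vector_Spaces.linear fscale fscale "contract c"
  by (rule linear_contract)

abbreviation link_sets :: "nat set set" where
  "link_sets \<equiv> k_subsets ({..<n} - {c}) (k - 1)"

lemma link_setsD: "B \<in> link_sets \<Longrightarrow> B \<subseteq> {..<n} \<and> c \<notin> B \<and> card B = k - 1 \<and> finite B"
  unfolding k_subsets_def by (auto intro: finite_subset)

lemma contract_support: "x \<in> extpow n k \<Longrightarrow> contract c x B \<noteq> 0 \<Longrightarrow> B \<in> link_sets"
  using extpow_support[OF contract_extpow] unfolding contract_def k_subsets_def
  by (fastforce split: if_splits)

lemma c_mem_lead: "x \<in> L \<Longrightarrow> x \<noteq> 0 \<Longrightarrow> c \<in> lead x"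
  using lead_sets_star unfolding lead_sets_def by blast

lemma contract_eq_0_imp_eq_0:
  assumes x: "x \<in> L" and "contract c x = 0" shows "x = 0"
proof (rule ccontr)
  assume "x \<noteq> 0"
  moreover have xE: "x \<in> extpow n k" using x L_extpow by auto
  ultimately have "contract c x (lead x - {c}) \<noteq> 0"
    unfolding contract_def using c_mem_lead[OF x] lead_nonzero[OF xE] by (simp add: insert_absorb)
  then show False using assms(2) by simp
qed

lemma contract_onto:
  assumes B: "B \<in> link_sets" shows "\<exists>x\<in>L. contract c x = indicator {B}"
proof -
  define U :: "(nat set \<Rightarrow> 'a) set" where "U = {u \<in> extpow n (k - 1). \<forall>B. c \<in> B \<longrightarrow> u B = 0}"
  have U: "U \<subseteq> extpow n (k - 1)" "fvs.subspace U"
    using subspace_extpow[of n "k - 1"] unfolding U_def fvs.subspace_def by (auto simp: fscale_def)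
  have image: "contract c ` L \<subseteq> U"
  proof
    fix z assume "z \<in> contract c ` L"
    then obtain x where "x \<in> L" "z = contract c x" by blast
    then show "z \<in> U"
      using contract_extpow[of x n k c] L_extpow unfolding U_def by (auto simp: contract_def)
  qed
  have "U \<subseteq> fvs.span (contract c ` L)"
  proof (rule subspace_subset_span_lead_cover[OF U image])
    fix u assume u: "u \<in> U" "u \<noteq> 0"
    then have uE: "u \<in> extpow n (k - 1)" using U(1) by auto
    have "c \<notin> lead u" using u lead_nonzero[OF uE u(2)] unfolding U_def by auto
    then have "insert c (lead u) \<in> lead_sets L"
      using lead_k_subsets[OF uE u(2)] k c unfolding lead_sets_star k_subsets_def
      by (auto simp: card_insert_if finite_subset)
    then obtain x where x: "x \<in> L" "x \<noteq> 0" "lead x = insert c (lead u)"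
      unfolding lead_sets_def by auto
    then have "lead (contract c x) = lead u"
      using lead_contract[of x n k c] L_extpow \<open>c \<notin> lead u\<close> by auto
    moreover have "contract c x \<noteq> 0" using contract_eq_0_imp_eq_0 x by blast
    ultimately show "\<exists>z\<in>contract c ` L. z \<noteq> 0 \<and> lead z = lead u" using x(1) by blast
  qed
  also have "fvs.span (contract c ` L) = contract c ` L"
    using contract.subspace_image[OF L_subspace] by simp
  finally have "U \<subseteq> contract c ` L" .
  moreover have "indicator {B} \<in> U"
    using B unfolding U_def extpow_def k_subsets_def by (auto simp: indicator_def)
  ultimately show ?thesis by (metis imageE subsetD)
qed

definition lift :: "nat set \<Rightarrow> nat set \<Rightarrow> 'a" where
  "lift B = (SOME x. x \<in> L \<and> contract c x = indicator {B})"

lemma lift: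
  assumes "B \<in> link_sets" shows "lift B \<in> L \<and> contract c (lift B) = indicator {B}"
  unfolding lift_def using someI_ex[OF contract_onto[OF assms, unfolded Bex_def]] .

lemma lift_extpow: "B \<in> link_sets \<Longrightarrow> lift B \<in> extpow n k"
  using lift L_extpow by blast

lemma lift_at_c:
  assumes B: "B \<in> link_sets" and cS: "c \<in> S"
  shows "lift B S = (if S = insert c B then shuffle_sign {c} B else 0)"
proof -
  have S: "insert c (S - {c}) = S" using cS by auto
  have "lift B S = shuffle_sign {c} (S - {c}) * (shuffle_sign {c} (S - {c}) * lift B S)"
    by (simp flip: mult.assoc)
  also have "shuffle_sign {c} (S - {c}) * lift B S = indicator {B} (S - {c})"
    using fun_cong[OF conjunct2[OF lift[OF B]], of "S - {c}"] S unfolding contract_def by simp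
  finally have eq: "lift B S = shuffle_sign {c} (S - {c}) * indicator {B} (S - {c})" .
  show ?thesis
  proof (cases "S = insert c B")
    case True
    then have "S - {c} = B" using link_setsD[OF B] by auto
    then show ?thesis using eq True by simp
  next
    case False
    then have "S - {c} \<noteq> B" using S by auto
    then show ?thesis using eq False by simp
  qed
qed

text \<open>Expand \<open>lift E \<and> lift B = 0\<close> at \<open>{c} \<union> D \<union> E\<close>, where \<open>E\<close> avoids \<open>D\<close> and a point \<open>b\<close> of
  \<open>B - D\<close>: by \<open>lift_at_c\<close> only the splitting \<open>insert c E \<union> D\<close> survives, and its term is \<open>\<plusminus>lift B D\<close>.\<close>
lemma lift_eq_0_unless_subset:
  assumes B: "B \<in> link_sets" and cD: "c \<notin> D" and not_sub: "\<not> B \<subseteq> D"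
  shows "lift B D = 0"
proof (rule ccontr)
  assume nz: "lift B D \<noteq> 0"
  have D: "D \<subseteq> {..<n}" "card D = k" "finite D"
    using extpow_support[OF lift_extpow[OF B] nz] by (auto simp: k_subsets_def finite_subset)
  obtain b where b: "b \<in> B" "b \<notin> D" using not_sub by auto
  have Bx: "B \<subseteq> {..<n}" "c \<notin> B" using link_setsD[OF B] by auto
  define Z where "Z = {..<n} - {c, b}"
  have "c \<noteq> b" "b < n" using b Bx by auto
  then have "card Z = n - 2" unfolding Z_def using c by (simp add: card_Diff_subset)
  moreover have "D \<subseteq> Z" unfolding Z_def using D cD b by auto
  ultimately have "card (Z - D) = n - 2 - k" using D by (simp add: card_Diff_subset)
  then have "k - 1 \<le> card (Z - D)" using k by simp
  then obtain E where E: "E \<subseteq> Z - D" "card E = k - 1" by (meson obtain_subset_with_card_n)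
  have fE: "finite E" using E unfolding Z_def by (auto intro: finite_subset)
  have EK: "E \<in> link_sets" using E unfolding Z_def k_subsets_def by auto
  define S where "S = insert c (D \<union> E)"
  have fS: "finite S" unfolding S_def using D fE by simp
  let ?f = "\<lambda>A. shuffle_sign A (S - A) * lift E A * lift B (S - A)"
  have others: "?f A = 0" if A: "A \<subseteq> S" "A \<noteq> insert c E" for A
  proof (cases "c \<in> A")
    case True
    then show ?thesis using lift_at_c[OF EK True] A by simp
  next
    case False
    have "b \<notin> S" unfolding S_def using b E \<open>c \<noteq> b\<close> unfolding Z_def by auto
    then have "S - A \<noteq> insert c B" using b by auto
    then show ?thesis using lift_at_c[OF B, of "S - A"] False unfolding S_def by simp
  qed
  have "wedge (lift E) (lift B) S = (\<Sum>A\<in>Pow S. ?f A)" unfolding wedge_def using fS by simp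
  also have "\<dots> = (\<Sum>A\<in>{insert c E}. ?f A)"
    using fS others by (intro sum.mono_neutral_right) (auto simp: S_def)
  finally have "wedge (lift E) (lift B) S = ?f (insert c E)" by simp
  moreover have "S - insert c E = D" unfolding S_def using cD E by auto
  moreover have "wedge (lift E) (lift B) S = 0" using isotropic lift[OF B] lift[OF EK] by auto
  ultimately have "shuffle_sign (insert c E) D * lift E (insert c E) * lift B D = 0" by simp
  then show False using nz lift_at_c[OF EK] by simp
qed

text \<open>Similarly, at \<open>{c, j} \<union> B \<union> C\<close> the expansion of \<open>lift B \<and> lift C = 0\<close> has exactly the two
  terms from the splittings \<open>insert c B \<union> insert j C\<close> and \<open>insert j B \<union> insert c C\<close>.\<close>
lemma lift_wedge_relation:
  assumes B: "B \<in> link_sets" and C: "C \<in> link_sets" and disj: "B \<inter> C = {}"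
    and j: "j \<noteq> c" "j \<notin> B" "j \<notin> C"
  shows "shuffle_sign (insert c B) (insert j C) * shuffle_sign {c} B * lift C (insert j C)
       + shuffle_sign (insert j B) (insert c C) * lift B (insert j B) * shuffle_sign {c} C = 0"
proof -
  have Bx: "c \<notin> B" "finite B" and Cx: "c \<notin> C" "finite C" using link_setsD[OF B] link_setsD[OF C] by auto
  define S where "S = insert c (insert j (B \<union> C))"
  have fS: "finite S" unfolding S_def using Bx Cx by simp
  have compl: "S - insert c B = insert j C" "S - insert j B = insert c C" "S - insert c C = insert j B"
    unfolding S_def using disj j Bx Cx by auto
  let ?f = "\<lambda>A. shuffle_sign A (S - A) * lift B A * lift C (S - A)"
  have others: "?f A = 0" if A: "A \<subseteq> S" "A \<notin> {insert c B, insert j B}" for A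
  proof (cases "c \<in> A")
    case True
    then show ?thesis using lift_at_c[OF B True] A by auto
  next
    case False
    have "S - A \<noteq> insert c C"
    proof
      assume "S - A = insert c C"
      then have "A = S - insert c C" using A(1) by auto
      then show False using compl(3) A(2) by simp
    qed
    then show ?thesis using lift_at_c[OF C, of "S - A"] False S_def by simp
  qed
  have "insert c B \<noteq> insert j B" using Bx j by blast
  have "wedge (lift B) (lift C) S = (\<Sum>A\<in>Pow S. ?f A)" unfolding wedge_def using fS by simp
  also have "\<dots> = (\<Sum>A\<in>{insert c B, insert j B}. ?f A)"
    using fS others by (intro sum.mono_neutral_right) (auto simp: S_def)
  also have "\<dots> = ?f (insert c B) + ?f (insert j B)" using \<open>insert c B \<noteq> insert j B\<close> by simp
  finally have "wedge (lift B) (lift C) S = ?f (insert c B) + ?f (insert j B)" .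
  moreover have "wedge (lift B) (lift C) S = 0" using isotropic lift[OF B] lift[OF C] by auto
  ultimately show ?thesis using compl lift_at_c[OF B] lift_at_c[OF C] by simp
qed

text \<open>If \<open>lift B = v \<and> e\<^sub>B\<close>, this is the coefficient \<open>v\<^sub>j\<close>.\<close>
definition lift_coeff :: "nat set \<Rightarrow> nat \<Rightarrow> 'a" where
  "lift_coeff B j = shuffle_sign {j} B * lift B (insert j B)"

lemma lift_coeff_eq_disjoint:
  assumes B: "B \<in> link_sets" and C: "C \<in> link_sets" and disj: "B \<inter> C = {}"
    and j: "j \<noteq> c" "j \<notin> B" "j \<notin> C"
  shows "lift_coeff B j = lift_coeff C j"
proof -
  have Bx: "c \<notin> B" "finite B" and Cx: "c \<notin> C" "finite C"
    using link_setsD[OF B] link_setsD[OF C] by auto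
  have lift_eq: "lift X (insert j X) = shuffle_sign {j} X * lift_coeff X j" for X
    unfolding lift_coeff_def by (simp flip: mult.assoc)
  define K1 where "K1 = shuffle_sign (insert c B) (insert j C) * shuffle_sign {c} B * (shuffle_sign {j} C :: 'a)"
  define K2 where "K2 = shuffle_sign (insert j B) (insert c C) * shuffle_sign {c} C * (shuffle_sign {j} B :: 'a)"
  have "K1 = - K2" unfolding K1_def K2_def
    using shuffle_sign_exchange[OF Bx(2) Cx(2) disj j(1)[symmetric] Bx(1) Cx(1) j(2,3)] by simp
  moreover have "K1 * lift_coeff C j + K2 * lift_coeff B j = 0"
    using lift_wedge_relation[OF B C disj j] unfolding K1_def K2_def lift_eq by (simp add: algebra_simps)
  ultimately have "K2 * (lift_coeff B j - lift_coeff C j) = 0" by (simp add: algebra_simps)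
  moreover have "K2 \<noteq> 0" unfolding K2_def by simp
  ultimately show ?thesis by simp
qed

lemma lift_coeff_indep:
  assumes j: "j < n" "j \<noteq> c" and B: "B \<in> link_sets" "j \<notin> B" and B': "B' \<in> link_sets" "j \<notin> B'"
  shows "lift_coeff B j = lift_coeff B' j"
proof -
  define Y where "Y = {..<n} - {c, j}"
  have mem_Y: "X \<in> k_subsets Y (k - 1) \<longleftrightarrow> X \<in> link_sets \<and> j \<notin> X" for X
    unfolding Y_def k_subsets_def by auto
  have "card Y = n - 2" unfolding Y_def using j c by (simp add: card_Diff_subset)
  then have Y: "finite Y" "2 * (k - 1) < card Y" using k by (simp_all add: Y_def)
  define Q where "Q = {X \<in> k_subsets Y (k - 1). lift_coeff X j = lift_coeff B j}"
  have B_Q: "B \<in> Q" unfolding Q_def using B mem_Y[of B] by simp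
  have closed: "X' \<in> Q" if X: "X \<in> Q" and X': "X' \<in> k_subsets Y (k - 1)" and "X \<inter> X' = {}" for X X'
  proof -
    have "X \<in> link_sets" "j \<notin> X" "X' \<in> link_sets" "j \<notin> X'" "lift_coeff X j = lift_coeff B j"
      using X X' mem_Y[of X] mem_Y[of X'] unfolding Q_def by simp_all
    then have "lift_coeff X' j = lift_coeff B j"
      using lift_coeff_eq_disjoint[of X X' j] \<open>X \<inter> X' = {}\<close> j(2) by simp
    then show ?thesis unfolding Q_def using X' by blast
  qed
  have "Q \<subseteq> k_subsets Y (k - 1)" unfolding Q_def by blast
  then have "Q = k_subsets Y (k - 1)" using closed B_Q by (rule kneser_graph_connected[OF Y])
  moreover have "B' \<in> k_subsets Y (k - 1)" using B' mem_Y[of B'] by simp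
  ultimately have "B' \<in> Q" by simp
  then show ?thesis unfolding Q_def by simp
qed

text \<open>The choice of \<open>B\<close> does not matter, by \<open>lift_coeff_indep\<close>.\<close>
definition v_coeff :: "nat \<Rightarrow> 'a" where
  "v_coeff j = (if j = c then 1 else if j < n then lift_coeff (SOME B. B \<in> link_sets \<and> j \<notin> B) j else 0)"

definition v :: "nat set \<Rightarrow> 'a" where
  "v S = (if is_singleton S then v_coeff (the_elem S) else 0)"

lemma lift_at_insert:
  assumes B: "B \<in> link_sets" and j: "j \<notin> B"
  shows "lift B (insert j B) = shuffle_sign {j} B * v_coeff j"
proof -
  consider "j = c" | "j \<noteq> c" "j < n" | "\<not> j < n" by blast
  then show ?thesis
  proof cases
    case 1
    then show ?thesis using lift_at_c[OF B] by (simp add: v_coeff_def)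
  next
    case 2
    define B' where "B' = (SOME B. B \<in> link_sets \<and> j \<notin> B)"
    have "B' \<in> link_sets \<and> j \<notin> B'" unfolding B'_def using B j by (intro someI) blast
    then have "v_coeff j = lift_coeff B j"
      using lift_coeff_indep[OF 2(2,1) _ _ B j] 2 unfolding v_coeff_def B'_def[symmetric] by simp
    then show ?thesis unfolding lift_coeff_def by (simp flip: mult.assoc)
  next
    case 3
    then have "\<not> insert j B \<subseteq> {..<n}" by auto
    then have "lift B (insert j B) = 0"
      using extpow_support[OF lift_extpow[OF B]] unfolding k_subsets_def by blast
    then show ?thesis using 3 c by (simp add: v_coeff_def)
  qed
qed

lemma lift_eq_0:
  assumes B: "B \<in> link_sets" and R: "\<not> (\<exists>j. j \<notin> B \<and> R = insert j B)"
  shows "lift B R = 0"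
proof (cases "c \<in> R")
  case True
  have "R \<noteq> insert c B" using R link_setsD[OF B] by blast
  then show ?thesis using lift_at_c[OF B True] by simp
next
  case False
  show ?thesis
  proof (rule ccontr)
    assume nz: "lift B R \<noteq> 0"
    then have "card R = k" "finite R"
      using extpow_support[OF lift_extpow[OF B] nz] by (auto simp: k_subsets_def finite_subset)
    moreover have "B \<subseteq> R" using lift_eq_0_unless_subset[OF B False] nz by blast
    ultimately have "card (R - B) = 1" using link_setsD[OF B] k by (simp add: card_Diff_subset)
    then obtain j where "R - B = {j}" by (rule card_1_singletonE)
    then have "j \<notin> B" "R = insert j B" using \<open>B \<subseteq> R\<close> by auto
    then show False using R by blast
  qed
qed


lemma v_nonzero_imp_singleton: "v S \<noteq> 0 \<Longrightarrow> \<exists>s. S = {s}"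
  unfolding v_def by (auto simp: is_singleton_def split: if_splits)

lemma v_singleton [simp]: "v {j} = v_coeff j"
  unfolding v_def by simp

lemma v_lift_term:
  assumes B: "B \<in> link_sets" and nz: "v A * lift B (S - A) \<noteq> 0" and AS: "A \<subseteq> S"
  shows "\<exists>p q. p \<notin> B \<and> q \<notin> B \<and> p \<noteq> q \<and> S = insert p (insert q B) \<and> A = {p}"
proof -
  have "v A \<noteq> 0" "lift B (S - A) \<noteq> 0" using nz by auto
  then obtain p where p: "A = {p}" using v_nonzero_imp_singleton by blast
  then obtain q where q: "q \<notin> B" "S - {p} = insert q B"
    using lift_eq_0[OF B] \<open>lift B (S - A) \<noteq> 0\<close> by blast
  moreover have "p \<in> S" using AS p by auto
  ultimately have "p \<notin> B" "p \<noteq> q" "S = insert p (insert q B)" by auto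
  then show ?thesis using p q(1) by blast
qed

text \<open>By \<open>v_lift_term\<close>, \<open>v \<and> lift B\<close> can only be nonzero at sets \<open>{p, q} \<union> B\<close>, and there
  its two terms cancel by \<open>lift_at_insert\<close> and \<open>shuffle_sign_exchange_singletons\<close>.\<close>
lemma wedge_v_lift:
  assumes B: "B \<in> link_sets" shows "wedge v (lift B) = 0"
proof
  fix S
  show "wedge v (lift B) S = 0 S"
  proof (cases "finite S")
    case False then show ?thesis unfolding wedge_def by simp
  next
    case fS: True
    have fB: "finite B" using link_setsD[OF B] by simp
    let ?f = "\<lambda>A. shuffle_sign A (S - A) * v A * lift B (S - A)"
    have only_terms: "\<exists>p q. p \<notin> B \<and> q \<notin> B \<and> p \<noteq> q \<and> S = insert p (insert q B) \<and> A = {p}"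
      if "?f A \<noteq> 0" "A \<subseteq> S" for A
      using v_lift_term[OF B _ that(2)] that(1) by simp
    show ?thesis
    proof (cases "\<exists>p q. p \<notin> B \<and> q \<notin> B \<and> p \<noteq> q \<and> S = insert p (insert q B)")
      case True
      then obtain p q where pq: "p \<notin> B" "q \<notin> B" "p \<noteq> q" and S: "S = insert p (insert q B)"
        by blast
      have others: "?f A = 0" if A: "A \<in> Pow S - {{p}, {q}}" for A
      proof (rule ccontr)
        assume "?f A \<noteq> 0"
        then obtain p' q' where "p' \<notin> B" "S = insert p' (insert q' B)" "A = {p'}"
          using only_terms A by blast
        then have "A = {p} \<or> A = {q}" using S by auto
        then show False using A by blast
      qed
      have "S - {p} = insert q B" "S - {q} = insert p B" using S pq by auto
      then have f_p: "?f {p} = shuffle_sign {p} (insert q B) * v_coeff p * (shuffle_sign {q} B * v_coeff q)"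
        and f_q: "?f {q} = shuffle_sign {q} (insert p B) * v_coeff q * (shuffle_sign {p} B * v_coeff p)"
        using lift_at_insert[OF B pq(1)] lift_at_insert[OF B pq(2)] by simp_all
      have "wedge v (lift B) S = (\<Sum>A\<in>Pow S. ?f A)" unfolding wedge_def using fS by simp
      also have "\<dots> = (\<Sum>A\<in>{{p}, {q}}. ?f A)"
        using fS others S by (intro sum.mono_neutral_right) auto
      also have "\<dots> = ?f {p} + ?f {q}" using pq(3) by simp
      also have "\<dots> = v_coeff p * v_coeff q * (shuffle_sign {p} (insert q B) * shuffle_sign {q} B
          + shuffle_sign {q} (insert p B) * shuffle_sign {p} B)"
        unfolding f_p f_q by (simp add: algebra_simps)
      also have "\<dots> = 0"
        using shuffle_sign_exchange_singletons[OF fB pq(3,1,2), where 'a = 'a] by simp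
      finally show ?thesis by simp
    next
      case False
      then have "?f A = 0" if "A \<in> Pow S" for A using only_terms[of A] that by blast
      then have "(\<Sum>A\<in>Pow S. ?f A) = 0" by (intro sum.neutral) blast
      then show ?thesis unfolding wedge_def using fS by simp
    qed
  qed
qed

lemma lift_expansion:
  assumes x: "x \<in> L" shows "x = (\<Sum>B\<in>link_sets. fscale (contract c x B) (lift B))"
proof -
  define s where "s = (\<Sum>B\<in>link_sets. fscale (contract c x B) (lift B))"
  have s: "s \<in> L" unfolding s_def
    using lift by (intro fvs.subspace_sum[OF L_subspace] fvs.subspace_scale[OF L_subspace]) auto
  have "contract c s = (\<Sum>B\<in>link_sets. fscale (contract c x B) (indicator {B}))"
    unfolding s_def contract.sum by (simp add: contract.scale lift)
  also have "\<dots> = contract c x"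
  proof
    fix T
    have "(\<Sum>B\<in>link_sets. fscale (contract c x B) (indicator {B})) T
        = (\<Sum>B\<in>link_sets. if B = T then contract c x B else 0)"
      unfolding sum_fun_apply fscale_def by (intro sum.cong) (auto simp: indicator_def)
    also have "\<dots> = contract c x T"
      using contract_support[of x T] x L_extpow finite_k_subsets[of "{..<n} - {c}" "k - 1"]
      by (auto simp: sum.delta')
    finally show "(\<Sum>B\<in>link_sets. fscale (contract c x B) (indicator {B})) T = contract c x T" .
  qed
  finally have "contract c (x - s) = 0" by (simp add: contract.diff)
  then have "x - s = 0" using contract_eq_0_imp_eq_0 fvs.subspace_diff[OF L_subspace x s] by blast
  then show ?thesis unfolding s_def by simp
qed

lemma wedge_v_L: "x \<in> L \<Longrightarrow> wedge v x = 0"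
proof -
  interpret wedge: Vector_Spaces.linear fscale fscale "wedge v" by (rule linear_wedge_right)
  assume "x \<in> L"
  then have "wedge v x = (\<Sum>B\<in>link_sets. fscale (contract c x B) (wedge v (lift B)))"
    by (subst lift_expansion) (simp_all add: wedge.sum wedge.scale)
  then show ?thesis using wedge_v_lift by (simp add: fvs.scale_zero_right)
qed

lemma v_extpow: "v \<in> extpow n 1"
  unfolding extpow_def
proof (intro CollectI allI impI)
  fix S assume nz: "v S \<noteq> 0"
  then obtain s where s: "S = {s}" using v_nonzero_imp_singleton by blast
  then have "s < n" using nz c by (auto simp: v_coeff_def split: if_splits)
  then show "S \<subseteq> {..<n} \<and> card S = 1" using s by simp
qed

lemma v_neq_0: "v \<noteq> 0"
proof
  assume "v = 0"
  then have "v {c} = 0" by simp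
  then show False by (simp add: v_coeff_def)
qed

theorem exists_annihilating_vector: "\<exists>v\<in>extpow n 1. v \<noteq> 0 \<and> (\<forall>x\<in>L. wedge v x = 0)"
  using v_extpow v_neq_0 wedge_v_L by blast

end

theorem corollary1p6:
  fixes L :: "(nat set \<Rightarrow> 'a::field) set" and n k :: nat
  assumes char_not_2: "(2::'a) \<noteq> 0"
    and k_lt: "2 * k < n"
    and L_sub: "L \<subseteq> extpow n k"
    and L_subspace: "fvs.subspace L"
    and isotropic: "\<forall>x\<in>L. \<forall>y\<in>L. wedge x y = 0"
    and dimL: "fvs.dim L = (n - 1) choose (k - 1)"
  shows "\<exists>v \<in> extpow n 1. v \<noteq> 0 \<and> (\<forall>x\<in>L. wedge v x = 0)"
proof -
  have sub: "lead_sets L \<subseteq> k_subsets {..<n} k" using L_sub by (rule lead_sets_k_subsets)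
  have I: "intersecting (lead_sets L)" using L_sub isotropic by (rule intersecting_lead_sets)
  have card: "card (lead_sets L) = (n - 1) choose (k - 1)"
    using card_lead_sets[OF L_sub L_subspace] dimL by simp
  have "k \<noteq> 0"
  proof
    assume "k = 0"
    then have "lead_sets L \<subseteq> {{}}" using sub by (auto simp: k_subsets_def finite_subset)
    then have "lead_sets L = {}" using intersecting_empty_notin[OF I] by blast
    then show False using card \<open>k = 0\<close> by simp
  qed
  then obtain c where c: "\<forall>A\<in>lead_sets L. c \<in> A"
    using ekr_extremal_star[OF sub I _ k_lt card] by auto
  have "lead_sets L \<noteq> {}" using card k_lt by auto
  then have "c < n" using c sub by (auto simp: k_subsets_def)
  then have "lead_sets L = {A \<in> k_subsets {..<n} k. c \<in> A}"
    using sub c card \<open>k \<noteq> 0\<close> by (intro star_eqI) auto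
  then interpret lead_star L n k c
    using L_sub L_subspace isotropic k_lt \<open>k \<noteq> 0\<close> \<open>c < n\<close> by unfold_locales auto
  show ?thesis by (rule exists_annihilating_vector)
qed

end
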